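(* Let $\Delta=(\alpha_1,\dots,\alpha_N)$ be ordered and let $B$ be the associated set of bases (defined below). For $b=(\beta_1,\dots,\beta_r)\in B$, listed in increasing order of indices, consider the linear form $$\phi^b:=Res_{\beta_1}\circ Res_{\beta_2}\circ\cdots\circ Res_{\beta_r}:S_\Delta\to k,$$ where $Res_{\beta_r}$ is applied first and each subsequent $\beta_i$ denotes its image in the successive quotient space. Then $(\phi^b)_{b\in B}$ is the dual basis of $(\phi_b)_{b\in B}$: for all $b,b'\in B$, $$\phi^b(\phi_{b'})=1\ \text{if } b=b',\qquad \phi^b(\phi_{b'})=0\ \text{otherwise}.$$
   Context: Let $k$ be a field of characteristic zero. For a finite-dimensional $k$-vector space $W$ of dimension $d$ and a finite set $\Lambda\subset W$ of nonzero vectors spanning $W$, let $S_\Lambda$ be the $k$-span of the rational functions $\phi_\sigma=1/\prod_{\alpha\in\sigma}\alpha$ on $W^*$, for $\sigma\subset\Lambda$ a basis of $W$. For $W=0$, $\Lambda=\emptyset$, we have $S_\emptyset=k$. For $\alpha\in\Lambda$, let $\Lambda/\alpha$ be the image of $\Lambda\setminus k\alpha$ in $W/k\alpha$; it spans $W/k\alpha$. Every $\phi\in S_\Lambda$ has at most a simple pole along the hyperplane $\{\alpha=0\}\subset W^*$, which is identified with $(W/k\alpha)^*$. Define $Res_\alpha:S_\Lambda\to S_{\Lambda/\alpha}$ by $Res_\alpha(\phi)=(\alpha\phi)|_{\{\alpha=0\}}$. Now let $V$ be a $k$-vector space of dimension $r$ and $\Delta=(\alpha_1,\dots,\alpha_N)$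 an ordered finite set of nonzero vectors spanning $V$. $B$ is the set of ordered bases $b=(\alpha_{i_1},\dots,\alpha_{i_r})$, $i_1<\dots<i_r$, of $V$ with elements in $\Delta$, such that for every $j\notin\{i_1,\dots,i_r\}$ the set $\{\alpha_j\}\cup\{\alpha_{i_p}:i_p>j\}$ is linearly independent. It is known that $(\phi_b)_{b\in B}$ is a basis of $S_\Delta$. For $b=(\beta_1,\dots,\beta_r)$, the composite $Res_{\beta_1}\circ\cdots\circ Res_{\beta_r}$ means: first $Res_{\beta_r}:S_\Delta\to S_{\Delta/\beta_r}$, then $Res$ along the image of $\beta_{r-1}$ in $V/k\beta_r$, and so on, ending in $S_\emptyset=k$. *)

theory Defs
  imports "HOL-Analysis.Analysis" "HOL-Computational_Algebra.Polynomial"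
begin

text \<open>Model: V = k^n (coefficient vectors), V* = k^n (points), with the pairing
  below; a vector alpha of V is the linear form x |-> pair alpha x on V*.\<close>

definition pair :: "'k::field ^ 'n \<Rightarrow> 'k ^ 'n \<Rightarrow> 'k" where
  "pair a x = (\<Sum>i\<in>UNIV. a $ i * x $ i)"

definition phi_idx :: "('k::field ^ 'n) list \<Rightarrow> nat set \<Rightarrow> ('k ^ 'n \<Rightarrow> 'k)" where
  "phi_idx D I = (\<lambda>x. 1 / (\<Prod>i\<in>I. pair (D ! i) x))"

definition regval :: "('k::field_char_0 \<Rightarrow> 'k) \<Rightarrow> 'k" where
  "regval g = (THE c. \<exists>p q. poly q 0 \<noteq> 0 \<and> c = poly p 0 / poly q 0 \<and>
                        finite {t. g t \<noteq> poly p t / poly q t})"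

text \<open>Residue along beta of a function living on the subspace U = {x. pair gamma x = 0 for
  all gamma in Z} of V* (which is the dual of V modulo the span of Z).  The result lives on
  U \<inter> {beta = 0}: its value at such x is the value at the hyperplane of (beta * psi),
  computed along the line x + t v, where v \<in> U with beta(v) = 1.\<close>
definition Res :: "('k::field_char_0 ^ 'n) list \<Rightarrow> 'k ^ 'n \<Rightarrow> ('k ^ 'n \<Rightarrow> 'k) \<Rightarrow> ('k ^ 'n \<Rightarrow> 'k)" where
  "Res Z \<beta> \<psi> = (let v = (SOME v. (\<forall>\<gamma>\<in>set Z. pair \<gamma> v = 0) \<and> pair \<beta> v = 1)
                 in (\<lambda>x. regval (\<lambda>t. pair \<beta> (x + t *s v) * \<psi> (x + t *s v))))"

text \<open>iter_res [beta_r, ..., beta_1] [] psi = Res_{beta_1} o ... o Res_{beta_r} psi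
  (Res_{beta_r} applied first), as a function on the final subspace.\<close>
fun iter_res :: "('k::field_char_0 ^ 'n) list \<Rightarrow> ('k ^ 'n) list \<Rightarrow> ('k ^ 'n \<Rightarrow> 'k) \<Rightarrow> ('k ^ 'n \<Rightarrow> 'k)" where
  "iter_res [] Z \<psi> = \<psi>"
| "iter_res (\<beta> # bs) Z \<psi> = iter_res bs (\<beta> # Z) (Res Z \<beta> \<psi>)"

text \<open>phi^b for b given by its index set I (listed in increasing order of indices);
  the final subspace is {0} = (V/V)* so evaluating at 0 is the identification S_empty = k.\<close>
definition res_form :: "('k::field_char_0 ^ 'n) list \<Rightarrow> nat set \<Rightarrow> ('k ^ 'n \<Rightarrow> 'k) \<Rightarrow> 'k" where
  "res_form D I \<psi> = iter_res (rev (map ((!) D) (sorted_list_of_set I))) [] \<psi> 0"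

definition basesB :: "('k::field ^ 'n) list \<Rightarrow> nat set set" where
  "basesB D = {I. I \<subseteq> {..<length D} \<and>
      vec.independent ((!) D ` I) \<and> vec.span ((!) D ` I) = UNIV \<and>
      (\<forall>j<length D. j \<notin> I \<longrightarrow>
          vec.independent (insert (D ! j) ((!) D ` {i\<in>I. j < i})))}"

end

theory Submission
  imports Defs
begin

text \<open>Along a line \<open>x + t v\<close> with \<open>\<beta>(v) = 1\<close> and \<open>v\<close> killed by the vectors already cut,
  \<open>Res\<^sub>\<beta> \<psi>\<close> is the value at \<open>t = 0\<close> of \<open>t \<psi>(x + t v)\<close>.  Starting from \<open>\<phi>\<^sub>b' = 1 / \<Prod>\<^sub>\<alpha>\<^sub>\<in>\<^sub>b' \<alpha>\<close>,
  every residue keeps the shape \<open>c / \<Prod> (forms of b' not yet in the span of the cut vectors)\<close>.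
  If no form of \<open>b'\<close> becomes dependent on the new vector \<open>\<beta>\<close>, there is no pole and the
  residue is \<open>0\<close>; otherwise, by linear independence, exactly one form \<open>\<alpha> \<equiv> a \<beta>\<close> (modulo the
  cut vectors) does, and \<open>c\<close> is divided by \<open>a\<close>, with \<open>a = 1\<close> when \<open>\<alpha> = \<beta>\<close>.  Hence
  \<open>\<phi>\<^sup>b(\<phi>\<^sub>b) = 1\<close>, while \<open>\<phi>\<^sup>b(\<phi>\<^sub>b') \<noteq> 0\<close> forces every step of the flag spanned by
  \<open>\<beta>\<^sub>r, \<beta>\<^sub>r\<^sub>-\<^sub>1, \<dots>\<close> to contain a new element of \<open>b'\<close>.  Choosing one for each step gives a map
  on indices that can only increase them, and the condition defining \<open>B\<close>, applied to \<open>b\<close>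
  and to \<open>b'\<close>, then forces \<open>b \<subseteq> b'\<close>, so \<open>b = b'\<close>.\<close>

section \<open>Linear algebra\<close>

context vector_space
begin

lemma unique_new_in_span_insert:
  assumes "independent (K \<union> Z)" and "a \<in> K" and "b \<in> K"
    and "a \<in> span (insert \<beta> Z)" and "a \<notin> span Z"
    and "b \<in> span (insert \<beta> Z)" and "b \<notin> span Z"
  shows "a = b"
proof (rule ccontr)
  assume "a \<noteq> b"
  have "\<beta> \<in> span (insert a Z)"
    using assms(4,5) by (rule in_span_insert)
  then have "insert \<beta> Z \<subseteq> span (insert a Z)"
    by (auto intro: span_base)
  then have "span (insert \<beta> Z) \<subseteq> span (insert a Z)"
    by (rule span_minimal[OF _ subspace_span])
  then have "b \<in> span ((K \<union> Z) - {b})"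
    using assms(2,6,7) \<open>a \<noteq> b\<close> span_base span_mono[of "insert a Z" "(K \<union> Z) - {b}"] by blast
  then show False
    using assms(1,3) dependent_def by blast
qed

lemma independent_exchange:
  assumes "independent (K \<union> Z)" and "k \<in> K"
    and "k \<in> span (insert \<beta> Z)" and "k \<notin> span Z"
  shows "independent (insert \<beta> ((K - {k}) \<union> Z))"
proof (rule independent_insertI)
  have "k \<notin> Z"
    using assms(4) span_base by blast
  then have remove_k: "(K - {k}) \<union> Z = (K \<union> Z) - {k}"
    by blast
  then show "independent ((K - {k}) \<union> Z)"
    using assms(1) independent_mono by auto
  show "\<beta> \<notin> span ((K - {k}) \<union> Z)"
  proof
    assume "\<beta> \<in> span ((K - {k}) \<union> Z)"
    then have "insert \<beta> Z \<subseteq> span ((K \<union> Z) - {k})"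
      using \<open>k \<notin> Z\<close> unfolding remove_k by (auto intro: span_base)
    then have "span (insert \<beta> Z) \<subseteq> span ((K \<union> Z) - {k})"
      by (rule span_minimal[OF _ subspace_span])
    then have "k \<in> span ((K \<union> Z) - {k})"
      using assms(3) by blast
    then show False
      using assms(1,2) dependent_def by blast
  qed
qed

lemma span_triangular:
  fixes I :: "nat set" and b w :: "nat \<Rightarrow> 'b"
  assumes "finite I"
    and w_in: "\<And>i. i \<in> I \<Longrightarrow> w i \<in> span (b ` {i' \<in> I. i \<le> i'})"
    and w_notin: "\<And>i. i \<in> I \<Longrightarrow> w i \<notin> span (b ` {i' \<in> I. i < i'})"
  shows "i \<in> I \<Longrightarrow> b i \<in> span (w ` {i' \<in> I. i \<le> i'})"
proof (induction "Max I - i" arbitrary: i rule: less_induct)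
  case less
  let ?W = "span (w ` {i' \<in> I. i \<le> i'})"
  let ?later = "b ` {i' \<in> I. i < i'}"
  have "{i' \<in> I. i \<le> i'} = insert i {i' \<in> I. i < i'}"
    using less.prems by auto
  then have "b ` {i' \<in> I. i \<le> i'} = insert (b i) ?later"
    by simp
  then have "b i \<in> span (insert (w i) ?later)"
    using in_span_insert[of "w i" "b i" ?later] w_in[OF less.prems] w_notin[OF less.prems] by simp
  moreover have "b i' \<in> ?W" if "i' \<in> I" "i < i'" for i'
  proof -
    have "Max I - i' < Max I - i"
      using that \<open>finite I\<close> Max_ge[of I i'] by linarith
    then have "b i' \<in> span (w ` {i'' \<in> I. i' \<le> i''})"
      using less.hyps that(1) by blast
    also have "\<dots> \<subseteq> ?W"
      using that(2) by (intro span_mono image_mono) auto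
    finally show ?thesis .
  qed
  then have "insert (w i) ?later \<subseteq> ?W"
    using less.prems span_base by fastforce
  ultimately show ?case
    using span_minimal[OF _ subspace_span] by blast
qed

end

lemma pair_add_left: "pair (a + b) x = pair a x + pair b x"
  by (simp add: pair_def distrib_right sum.distrib)

lemma pair_scale_left: "pair (c *s a) x = c * pair a x"
  by (simp add: pair_def sum_distrib_left mult_ac)

lemma pair_diff_left: "pair (a - b) x = pair a x - pair b x"
  by (simp add: pair_def left_diff_distrib sum_subtractf)

lemma pair_zero_left [simp]: "pair 0 x = 0"
  by (simp add: pair_def)

lemma pair_zero_right [simp]: "pair a 0 = 0"
  by (simp add: pair_def)

lemma pair_line: "pair a (x + t *s v) = pair a x + t * pair a v"
  by (simp add: pair_def distrib_left sum.distrib sum_distrib_left mult_ac)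

lemma pair_eq_0_on_span:
  assumes "a \<in> vec.span S" and "\<forall>s\<in>S. pair s x = 0"
  shows "pair a x = 0"
proof -
  have "vec.subspace {a. pair a x = 0}"
    by (auto simp: vec.subspace_def pair_add_left pair_scale_left)
  with assms show ?thesis
    using vec.span_minimal[of S "{a. pair a x = 0}"] by blast
qed

lemma pair_ne_0_if_new_in_span_insert:
  assumes "k \<in> vec.span (insert \<beta> S)" and "k \<notin> vec.span S"
    and "\<forall>\<gamma>\<in>S. pair \<gamma> v = 0" and "pair \<beta> v = 1"
  shows "pair k v \<noteq> 0"
proof -
  obtain a where a: "k - a *s \<beta> \<in> vec.span S"
    using assms(1) vec.span_breakdown_eq by blast
  with assms(2) have "a \<noteq> 0"
    by auto
  moreover have "pair k v = a"
    using pair_eq_0_on_span[OF a assms(3)] assms(4) by (simp add: pair_diff_left pair_scale_left)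
  ultimately show ?thesis
    by simp
qed

lemma exists_pair_dual_vector:
  fixes \<beta> :: "'k::field ^ 'n"
  assumes "\<beta> \<notin> vec.span S"
  shows "\<exists>v. (\<forall>\<gamma>\<in>S. pair \<gamma> v = 0) \<and> pair \<beta> v = 1"
proof -
  obtain B where "B \<subseteq> S" "vec.independent B" "S \<subseteq> vec.span B"
    by (rule vec.maximal_independent_subset)
  then have "vec.span B = vec.span S"
    by (simp add: vec.span_eq vec.span_superset subset_trans)
  with assms \<open>vec.independent B\<close> have "vec.independent (insert \<beta> B)"
    by (simp add: vec.independent_insertI)
  fix i :: 'n
  obtain g where g: "Vector_Spaces.linear (*s) (*s) g"
    and g_basis: "\<forall>b\<in>insert \<beta> B. g b = (if b = \<beta> then axis i 1 else 0)"
    using vec.linear_independent_extend[OF \<open>vec.independent (insert \<beta> B)\<close>,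
          of "\<lambda>b. if b = \<beta> then axis i 1 else 0"] by blast
  define v where "v = row i (matrix g)"
  have pair_v: "pair a v = g a $ i" for a
  proof -
    have "(matrix g *v a) $ i = g a $ i"
      by (simp add: matrix_works[OF g])
    then show ?thesis
      by (simp add: pair_def v_def row_def matrix_vector_mult_def mult.commute)
  qed
  have "g \<gamma> = 0" if "\<gamma> \<in> S" for \<gamma>
  proof (rule vec.linear_eq_0_on_span[OF g])
    show "g b = 0" if "b \<in> B" for b
    proof -
      have "b \<noteq> \<beta>" using that \<open>B \<subseteq> S\<close> assms vec.span_base by blast
      then show ?thesis using g_basis that by simp
    qed
    show "\<gamma> \<in> vec.span B" using that \<open>S \<subseteq> vec.span B\<close> by blast
  qed
  with g_basis show ?thesis
    by (intro exI[of _ v]) (simp add: pair_v axis_def)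
qed

section \<open>Values at \<open>0\<close> of rational functions\<close>

lemma poly_eq_if_cofinitely_eq:
  fixes p p' :: "'k::{idom, ring_char_0} poly"
  assumes "finite {t. poly p t \<noteq> poly p' t}"
  shows "p = p'"
proof (rule ccontr)
  assume "p \<noteq> p'"
  then have "finite {t. poly p t = poly p' t}"
    using poly_roots_finite[of "p - p'"] by simp
  with assms have "finite ({t. poly p t = poly p' t} \<union> {t. poly p t \<noteq> poly p' t})"
    by blast
  moreover have "{t. poly p t = poly p' t} \<union> {t. poly p t \<noteq> poly p' t} = UNIV"
    by auto
  ultimately show False
    by (metis infinite_UNIV_char_0)
qed

lemma regval_eqI:
  fixes p q :: "'k::field_char_0 poly"
  assumes "poly q 0 \<noteq> 0" and "finite {t. g t \<noteq> poly p t / poly q t}"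
  shows "regval g = poly p 0 / poly q 0"
  unfolding regval_def
proof (rule the_equality)
  show "\<exists>p' q'. poly q' 0 \<noteq> 0 \<and> poly p 0 / poly q 0 = poly p' 0 / poly q' 0 \<and>
      finite {t. g t \<noteq> poly p' t / poly q' t}"
    using assms by blast
next
  fix c
  assume "\<exists>p' q'. poly q' 0 \<noteq> 0 \<and> c = poly p' 0 / poly q' 0 \<and>
      finite {t. g t \<noteq> poly p' t / poly q' t}"
  then obtain p' q' where q': "poly q' 0 \<noteq> 0" and c: "c = poly p' 0 / poly q' 0"
    and g': "finite {t. g t \<noteq> poly p' t / poly q' t}"
    by blast
  have "q \<noteq> 0" "q' \<noteq> 0"
    using assms(1) q' by auto
  then have "finite ({t. g t \<noteq> poly p t / poly q t} \<union> {t. g t \<noteq> poly p' t / poly q' t}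
      \<union> {t. poly q t = 0} \<union> {t. poly q' t = 0})"
    using assms(2) g' by (simp add: poly_roots_finite)
  moreover have "{t. poly (p * q') t \<noteq> poly (p' * q) t} \<subseteq> {t. g t \<noteq> poly p t / poly q t}
      \<union> {t. g t \<noteq> poly p' t / poly q' t} \<union> {t. poly q t = 0} \<union> {t. poly q' t = 0}"
    by (auto simp: frac_eq_eq)
  ultimately have "p * q' = p' * q"
    by (blast intro: poly_eq_if_cofinitely_eq finite_subset)
  then have "poly p 0 * poly q' 0 = poly p' 0 * poly q 0"
    by (metis poly_mult)
  with assms(1) q' c show "c = poly p 0 / poly q 0"
    by (simp add: frac_eq_eq)
qed

lemma regval_cong_cofinite:
  fixes g h :: "'k::field_char_0 \<Rightarrow> 'k"
  assumes "finite {t. g t \<noteq> h t}"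
  shows "regval g = regval h"
proof -
  have "finite {t. g t \<noteq> f t} \<longleftrightarrow> finite {t. h t \<noteq> f t}" for f :: "'k \<Rightarrow> 'k"
  proof -
    have "{t. g t \<noteq> f t} \<subseteq> {t. g t \<noteq> h t} \<union> {t. h t \<noteq> f t}"
      and "{t. h t \<noteq> f t} \<subseteq> {t. g t \<noteq> h t} \<union> {t. g t \<noteq> f t}"
      by auto
    with assms show ?thesis
      by (meson finite_UnI finite_subset)
  qed
  then show ?thesis
    unfolding regval_def by simp
qed

lemma regval_const_0 [simp]: "regval (\<lambda>_. 0 :: 'k::field_char_0) = 0"
  using regval_eqI[of 1 "\<lambda>_. 0" 0] by simp

lemma finite_zeros_affine:
  fixes a b :: "'k::field"
  assumes "a \<noteq> 0 \<or> b \<noteq> 0"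
  shows "finite {t. a + t * b = 0}"
  using assms poly_roots_finite[of "[:a, b:]"] by simp

lemma regval_linear_factors_regular:
  fixes a b :: "'a \<Rightarrow> 'k::field_char_0"
  assumes "finite K" and "\<forall>k\<in>K. a k \<noteq> 0"
  shows "regval (\<lambda>t. t * (c / (\<Prod>k\<in>K. a k + t * b k))) = 0"
proof -
  define q where "q = (\<Prod>k\<in>K. [:a k, b k:])"
  have poly_q: "poly q t = (\<Prod>k\<in>K. a k + t * b k)" for t
    by (simp add: q_def poly_prod)
  have "poly q 0 \<noteq> 0"
    using assms by (simp add: poly_q)
  then have "regval (\<lambda>t. t * (c / (\<Prod>k\<in>K. a k + t * b k))) = poly [:0, c:] 0 / poly q 0"
    by (rule regval_eqI) (simp add: poly_q mult.commute)
  then show ?thesis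
    by simp
qed

lemma regval_linear_factors_simple_pole:
  fixes a b :: "'a \<Rightarrow> 'k::field_char_0"
  assumes "finite K" and "k0 \<in> K" and "a k0 = 0" and "b k0 \<noteq> 0"
    and "\<forall>k\<in>K - {k0}. a k \<noteq> 0"
  shows "regval (\<lambda>t. t * (c / (\<Prod>k\<in>K. a k + t * b k))) = c / (b k0 * (\<Prod>k\<in>K - {k0}. a k))"
proof -
  define q where "q = smult (b k0) (\<Prod>k\<in>K - {k0}. [:a k, b k:])"
  have poly_q: "poly q t = b k0 * (\<Prod>k\<in>K - {k0}. a k + t * b k)" for t
    by (simp add: q_def poly_prod)
  have "poly q 0 \<noteq> 0"
    using assms by (simp add: poly_q)
  moreover have "t * (c / (\<Prod>k\<in>K. a k + t * b k)) = poly [:c:] t / poly q t" if "t \<noteq> 0" for t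
    using that assms(1-3) by (simp add: poly_q prod.remove mult.assoc)
  then have "finite {t. t * (c / (\<Prod>k\<in>K. a k + t * b k)) \<noteq> poly [:c:] t / poly q t}"
    by (auto intro: finite_subset[of _ "{0}"])
  ultimately have "regval (\<lambda>t. t * (c / (\<Prod>k\<in>K. a k + t * b k))) = poly [:c:] 0 / poly q 0"
    by (rule regval_eqI)
  then show ?thesis
    by (simp add: poly_q)
qed

section \<open>Residues of simple fractions\<close>

lemma Res_along_line:
  assumes "\<beta> \<notin> vec.span (set Z)"
  obtains v where "\<forall>\<gamma>\<in>set Z. pair \<gamma> v = 0" and "pair \<beta> v = 1"
    and "\<And>\<psi> x. Res Z \<beta> \<psi> x = regval (\<lambda>t. pair \<beta> (x + t *s v) * \<psi> (x + t *s v))"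
proof -
  define v where "v = (SOME v. (\<forall>\<gamma>\<in>set Z. pair \<gamma> v = 0) \<and> pair \<beta> v = 1)"
  have "(\<forall>\<gamma>\<in>set Z. pair \<gamma> v = 0) \<and> pair \<beta> v = 1"
    unfolding v_def by (rule someI_ex) (rule exists_pair_dual_vector[OF assms])
  then show thesis
    by (intro that[of v]) (simp_all add: Res_def v_def Let_def)
qed

definition remaining_factors :: "('k::field ^ 'n) set \<Rightarrow> ('k ^ 'n) list \<Rightarrow> ('k ^ 'n) set" where
  "remaining_factors A Z = A - vec.span (set Z)"

text \<open>On the subspace \<open>Z = 0\<close>, i.e. on \<open>(V / span Z)\<^sup>*\<close>, \<open>\<psi>\<close> is \<open>c\<close> over the product of the forms
  of \<open>A\<close> that do not vanish identically there; the independence clause is what keeps every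
  later pole simple.\<close>

definition residue_state :: "('k::field ^ 'n) set \<Rightarrow> ('k ^ 'n) list \<Rightarrow> ('k ^ 'n \<Rightarrow> 'k) \<Rightarrow> 'k \<Rightarrow> bool" where
  "residue_state A Z \<psi> c \<longleftrightarrow>
    (\<forall>x. (\<forall>z\<in>set Z. pair z x = 0) \<longrightarrow> (\<forall>k\<in>remaining_factors A Z. pair k x \<noteq> 0) \<longrightarrow>
       \<psi> x = c / (\<Prod>k\<in>remaining_factors A Z. pair k x)) \<and>
    (c \<noteq> 0 \<longrightarrow> vec.independent (remaining_factors A Z \<union> set Z))"

lemma Res_residue_state_on_line:
  assumes "finite A" and "residue_state A Z \<psi> c"
    and v: "\<forall>\<gamma>\<in>set Z. pair \<gamma> v = 0" "pair \<beta> v = 1"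
    and x: "\<forall>z\<in>set (\<beta> # Z). pair z x = 0" "\<forall>k\<in>remaining_factors A (\<beta> # Z). pair k x \<noteq> 0"
  shows "regval (\<lambda>t. pair \<beta> (x + t *s v) * \<psi> (x + t *s v)) =
    regval (\<lambda>t. t * (c / (\<Prod>k\<in>remaining_factors A Z. pair k x + t * pair k v)))"
proof (rule regval_cong_cofinite)
  let ?K = "remaining_factors A Z"
  have "pair k x \<noteq> 0 \<or> pair k v \<noteq> 0" if "k \<in> ?K" for k
  proof (cases "k \<in> vec.span (insert \<beta> (set Z))")
    case True
    with that v show ?thesis
      using pair_ne_0_if_new_in_span_insert[of k \<beta> "set Z" v] by (simp add: remaining_factors_def)
  next
    case False
    with that x(2) show ?thesis
      by (simp add: remaining_factors_def)
  qed
  then have "finite (\<Union>k\<in>?K. {t. pair k x + t * pair k v = 0})"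
    using \<open>finite A\<close> by (simp add: remaining_factors_def finite_zeros_affine)
  moreover have "pair \<beta> (x + t *s v) * \<psi> (x + t *s v) = t * (c / (\<Prod>k\<in>?K. pair k x + t * pair k v))"
    if "t \<notin> (\<Union>k\<in>?K. {t. pair k x + t * pair k v = 0})" for t
  proof -
    have "\<forall>z\<in>set Z. pair z (x + t *s v) = 0"
      using v(1) x(1) by (simp add: pair_line)
    moreover have "\<forall>k\<in>?K. pair k (x + t *s v) \<noteq> 0"
      using that by (simp add: pair_line)
    ultimately have "\<psi> (x + t *s v) = c / (\<Prod>k\<in>?K. pair k (x + t *s v))"
      using assms(2) by (simp add: residue_state_def)
    moreover have "pair \<beta> (x + t *s v) = t"
      using v(2) x(1) by (simp add: pair_line)
    ultimately show ?thesis
      by (simp add: pair_line)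
  qed
  then have "{t. pair \<beta> (x + t *s v) * \<psi> (x + t *s v) \<noteq> t * (c / (\<Prod>k\<in>?K. pair k x + t * pair k v))}
      \<subseteq> (\<Union>k\<in>?K. {t. pair k x + t * pair k v = 0})"
    by blast
  ultimately show "finite {t. pair \<beta> (x + t *s v) * \<psi> (x + t *s v) \<noteq>
      t * (c / (\<Prod>k\<in>?K. pair k x + t * pair k v))}"
    by (rule finite_subset[rotated])
qed

lemma residue_state_Res_vanishing:
  assumes "finite A" and "\<beta> \<notin> vec.span (set Z)" and "residue_state A Z \<psi> c"
    and "c = 0 \<or> (\<forall>k\<in>A. k \<in> vec.span (insert \<beta> (set Z)) \<longrightarrow> k \<in> vec.span (set Z))"
  shows "residue_state A (\<beta> # Z) (Res Z \<beta> \<psi>) 0"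
proof -
  obtain v where v: "\<forall>\<gamma>\<in>set Z. pair \<gamma> v = 0" "pair \<beta> v = 1"
    and Res_v: "\<And>\<psi> x. Res Z \<beta> \<psi> x = regval (\<lambda>t. pair \<beta> (x + t *s v) * \<psi> (x + t *s v))"
    using Res_along_line[OF assms(2)] by blast
  have "Res Z \<beta> \<psi> x = 0"
    if x: "\<forall>z\<in>set (\<beta> # Z). pair z x = 0" "\<forall>k\<in>remaining_factors A (\<beta> # Z). pair k x \<noteq> 0" for x
  proof -
    have "Res Z \<beta> \<psi> x = regval (\<lambda>t. t * (c / (\<Prod>k\<in>remaining_factors A Z. pair k x + t * pair k v)))"
      using Res_residue_state_on_line[OF assms(1,3) v x] by (simp add: Res_v)
    also have "\<dots> = 0"
    proof (cases "c = 0")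
      case False
      have "vec.span (set Z) \<subseteq> vec.span (insert \<beta> (set Z))"
        by (rule vec.span_mono) blast
      with False assms(4) have "remaining_factors A Z = remaining_factors A (\<beta> # Z)"
        by (auto simp: remaining_factors_def)
      with assms(1) x(2) show ?thesis
        by (intro regval_linear_factors_regular) (simp_all add: remaining_factors_def)
    qed simp
    finally show ?thesis .
  qed
  then show ?thesis
    by (simp add: residue_state_def)
qed

lemma remaining_factors_Cons_new:
  assumes "vec.independent (remaining_factors A Z \<union> set Z)"
    and "k0 \<in> remaining_factors A Z" and "k0 \<in> vec.span (insert \<beta> (set Z))"
  shows "remaining_factors A (\<beta> # Z) = remaining_factors A Z - {k0}"
proof
  show "remaining_factors A (\<beta> # Z) \<subseteq> remaining_factors A Z - {k0}"
    using assms(3) vec.span_mono[of "set Z" "insert \<beta> (set Z)"]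
    by (auto simp: remaining_factors_def)
  have "k0 \<notin> vec.span (set Z)"
    using assms(2) by (simp add: remaining_factors_def)
  then show "remaining_factors A Z - {k0} \<subseteq> remaining_factors A (\<beta> # Z)"
    using vec.unique_new_in_span_insert[OF assms(1) _ assms(2) _ _ assms(3)]
    by (auto simp: remaining_factors_def)
qed

lemma residue_state_Res_simple_pole:
  assumes "finite A" and "\<beta> \<notin> vec.span (set Z)" and "residue_state A Z \<psi> c" and "c \<noteq> 0"
    and "k0 \<in> A" and "k0 \<notin> vec.span (set Z)" and "k0 - a *s \<beta> \<in> vec.span (set Z)"
  shows "residue_state A (\<beta> # Z) (Res Z \<beta> \<psi>) (c / a)"
proof -
  obtain v where v: "\<forall>\<gamma>\<in>set Z. pair \<gamma> v = 0" "pair \<beta> v = 1"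
    and Res_v: "\<And>\<psi> x. Res Z \<beta> \<psi> x = regval (\<lambda>t. pair \<beta> (x + t *s v) * \<psi> (x + t *s v))"
    using Res_along_line[OF assms(2)] by blast
  let ?K = "remaining_factors A Z"
  have k0_K: "k0 \<in> ?K"
    using assms(5,6) by (simp add: remaining_factors_def)
  have k0_new: "k0 \<in> vec.span (insert \<beta> (set Z))"
    using assms(7) vec.span_breakdown_eq by blast
  have indep: "vec.independent (?K \<union> set Z)"
    using assms(3,4) by (simp add: residue_state_def)
  have remaining_Cons: "remaining_factors A (\<beta> # Z) = ?K - {k0}"
    using indep k0_K k0_new by (rule remaining_factors_Cons_new)
  have "pair k0 v = a"
    using pair_eq_0_on_span[OF assms(7) v(1)] v(2) by (simp add: pair_diff_left pair_scale_left)
  have "Res Z \<beta> \<psi> x = c / a / (\<Prod>k\<in>?K - {k0}. pair k x)"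
    if x: "\<forall>z\<in>set (\<beta> # Z). pair z x = 0" "\<forall>k\<in>remaining_factors A (\<beta> # Z). pair k x \<noteq> 0" for x
  proof -
    have "pair k0 x = 0"
      using pair_eq_0_on_span[OF k0_new] x(1) by simp
    have "Res Z \<beta> \<psi> x = regval (\<lambda>t. t * (c / (\<Prod>k\<in>?K. pair k x + t * pair k v)))"
      using Res_residue_state_on_line[OF assms(1,3) v x] by (simp add: Res_v)
    also have "\<dots> = c / (pair k0 v * (\<Prod>k\<in>?K - {k0}. pair k x))"
    proof (rule regval_linear_factors_simple_pole)
      show "finite ?K"
        using assms(1) by (simp add: remaining_factors_def)
      show "pair k0 v \<noteq> 0"
        using assms(6,7) \<open>pair k0 v = a\<close> by auto
      show "\<forall>k\<in>?K - {k0}. pair k x \<noteq> 0"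
        using x(2) by (simp add: remaining_Cons)
    qed fact+
    finally show ?thesis
      using \<open>pair k0 v = a\<close> by simp
  qed
  moreover have "vec.independent (remaining_factors A (\<beta> # Z) \<union> set (\<beta> # Z))"
    using vec.independent_exchange[OF indep k0_K k0_new assms(6)] by (simp add: remaining_Cons)
  ultimately show ?thesis
    by (simp add: residue_state_def remaining_Cons)
qed

lemma residue_state_at_0:
  assumes "residue_state A Z \<psi> c" and "A \<subseteq> vec.span (set Z)"
  shows "\<psi> 0 = c"
proof -
  have "remaining_factors A Z = {}"
    using assms(2) by (auto simp: remaining_factors_def)
  with assms(1) show ?thesis
    by (simp add: residue_state_def)
qed

section \<open>Iterated residues and flags\<close>

fun flag_adapted :: "('k::field ^ 'n) set \<Rightarrow> ('k ^ 'n) list \<Rightarrow> ('k ^ 'n) list \<Rightarrow> bool" where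
  "flag_adapted A Z [] \<longleftrightarrow> True"
| "flag_adapted A Z (\<beta> # bs) \<longleftrightarrow>
    (\<exists>k\<in>A. k \<in> vec.span (insert \<beta> (set Z)) \<and> k \<notin> vec.span (set Z)) \<and> flag_adapted A (\<beta> # Z) bs"

lemma flag_adapted_append:
  "flag_adapted A Z (bs1 @ \<beta> # bs2) \<Longrightarrow>
    \<exists>k\<in>A. k \<in> vec.span (insert \<beta> (set bs1 \<union> set Z)) \<and> k \<notin> vec.span (set bs1 \<union> set Z)"
proof (induction bs1 arbitrary: Z)
  case (Cons \<beta>' bs1)
  then show ?case
    using Cons.IH[of "\<beta>' # Z"] by simp
qed simp

lemma not_in_span_if_distinct_independent:
  assumes "distinct ((\<beta> # bs) @ Z)" and "vec.independent (set ((\<beta> # bs) @ Z))"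
  shows "\<beta> \<notin> vec.span (set Z)"
proof -
  have "\<beta> \<notin> set bs \<union> set Z" and "vec.independent (insert \<beta> (set bs \<union> set Z))"
    using assms by auto
  then have "\<beta> \<notin> vec.span (set bs \<union> set Z)"
    by (simp add: vec.independent_insert)
  then show ?thesis
    using vec.span_mono[of "set Z" "set bs \<union> set Z"] by blast
qed

lemma iter_res_nonzero_imp_flag_adapted:
  assumes "finite A" and "distinct (bs @ Z)" and "vec.independent (set (bs @ Z))"
    and "A \<subseteq> vec.span (set (bs @ Z))" and "residue_state A Z \<psi> c" and "iter_res bs Z \<psi> 0 \<noteq> 0"
  shows "c \<noteq> 0 \<and> flag_adapted A Z bs"
  using assms(2-)
proof (induction bs arbitrary: Z \<psi> c)
  case Nil
  then show ?case
    using residue_state_at_0 by fastforce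
next
  case (Cons \<beta> bs)
  have \<beta>: "\<beta> \<notin> vec.span (set Z)"
    using Cons.prems(1,2) by (rule not_in_span_if_distinct_independent)
  note IH = Cons.IH[of "\<beta> # Z"]
  have set_eq: "set (bs @ \<beta> # Z) = set ((\<beta> # bs) @ Z)"
    by simp
  show ?case
  proof (cases "c = 0 \<or> (\<forall>k\<in>A. k \<in> vec.span (insert \<beta> (set Z)) \<longrightarrow> k \<in> vec.span (set Z))")
    case True
    then have "residue_state A (\<beta> # Z) (Res Z \<beta> \<psi>) 0"
      using residue_state_Res_vanishing[OF assms(1) \<beta> Cons.prems(4)] by blast
    then show ?thesis
      using IH[of "Res Z \<beta> \<psi>" 0] Cons.prems unfolding set_eq by simp
  next
    case False
    then obtain k0 where "c \<noteq> 0" "k0 \<in> A" "k0 \<in> vec.span (insert \<beta> (set Z))" "k0 \<notin> vec.span (set Z)"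
      by blast
    moreover obtain a where "k0 - a *s \<beta> \<in> vec.span (set Z)"
      using \<open>k0 \<in> vec.span (insert \<beta> (set Z))\<close> vec.span_breakdown_eq by blast
    ultimately have "residue_state A (\<beta> # Z) (Res Z \<beta> \<psi>) (c / a)"
      using residue_state_Res_simple_pole[OF assms(1) \<beta> Cons.prems(4)] by blast
    then show ?thesis
      using IH[of "Res Z \<beta> \<psi>" "c / a"] Cons.prems \<open>c \<noteq> 0\<close> \<open>k0 \<in> A\<close> \<open>k0 \<in> vec.span (insert \<beta> (set Z))\<close>
        \<open>k0 \<notin> vec.span (set Z)\<close> unfolding set_eq by auto
  qed
qed

lemma iter_res_complete:
  assumes "finite A" and "distinct (bs @ Z)" and "vec.independent (set (bs @ Z))"
    and "residue_state A Z \<psi> c" and "A = set bs \<union> set Z"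
  shows "iter_res bs Z \<psi> 0 = c"
  using assms(2-)
proof (induction bs arbitrary: Z \<psi>)
  case Nil
  then have "A \<subseteq> vec.span (set Z)"
    using vec.span_superset by auto
  then show ?case
    using residue_state_at_0[OF Nil.prems(3)] by simp
next
  case (Cons \<beta> bs)
  have \<beta>: "\<beta> \<notin> vec.span (set Z)"
    using Cons.prems(1,2) by (rule not_in_span_if_distinct_independent)
  have "residue_state A (\<beta> # Z) (Res Z \<beta> \<psi>) c"
  proof (cases "c = 0")
    case True
    then show ?thesis
      using residue_state_Res_vanishing[OF assms(1) \<beta> Cons.prems(3)] by simp
  next
    case False
    then show ?thesis
      using residue_state_Res_simple_pole[OF assms(1) \<beta> Cons.prems(3) False, of \<beta> 1] \<beta> Cons.prems(4)
      by (simp add: vec.span_zero)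
  qed
  then show ?case
    using Cons.IH[of "\<beta> # Z"] Cons.prems by simp
qed

section \<open>The bases \<open>B\<close>\<close>

lemma basesB_not_in_span_later:
  assumes "distinct D" and "I \<in> basesB D" and "j < length D" and "j \<notin> I"
  shows "D ! j \<notin> vec.span ((!) D ` {i \<in> I. j < i})"
proof -
  have "D ! j \<notin> (!) D ` {i \<in> I. j < i}"
    using assms by (auto simp: basesB_def nth_eq_iff_index_eq)
  moreover have "vec.independent (insert (D ! j) ((!) D ` {i \<in> I. j < i}))"
    using assms(2-4) by (simp add: basesB_def)
  ultimately show ?thesis
    by (simp add: vec.independent_insert)
qed

lemma basesB_flag_index_le:
  assumes "distinct D" and "I \<in> basesB D" and "i \<in> I" and "j < length D"
    and "D ! j \<in> vec.span ((!) D ` {i' \<in> I. i \<le> i'})"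
  shows "i \<le> j"
proof (rule ccontr)
  assume "\<not> i \<le> j"
  show False
  proof (cases "j \<in> I")
    case True
    have "(!) D ` {i' \<in> I. i \<le> i'} \<subseteq> (!) D ` I - {D ! j}"
      using assms(1,2,4) \<open>\<not> i \<le> j\<close> by (auto simp: basesB_def nth_eq_iff_index_eq)
    then have "D ! j \<in> vec.span ((!) D ` I - {D ! j})"
      using assms(5) vec.span_mono by blast
    then have "vec.dependent ((!) D ` I)"
      using True vec.dependent_def by blast
    then show False
      using assms(2) by (simp add: basesB_def)
  next
    case False
    have "vec.span ((!) D ` {i' \<in> I. i \<le> i'}) \<subseteq> vec.span ((!) D ` {i' \<in> I. j < i'})"
      using \<open>\<not> i \<le> j\<close> by (intro vec.span_mono image_mono) auto
    then show False
      using assms(5) basesB_not_in_span_later[OF assms(1,2,4) False] by blast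
  qed
qed

lemma basesB_subset_if_flag_witnesses:
  assumes "distinct D" and I: "I \<in> basesB D" and J: "J \<in> basesB D"
    and f: "\<And>i. i \<in> I \<Longrightarrow> f i \<in> J"
    and f_in: "\<And>i. i \<in> I \<Longrightarrow> D ! f i \<in> vec.span ((!) D ` {i' \<in> I. i \<le> i'})"
    and f_notin: "\<And>i. i \<in> I \<Longrightarrow> D ! f i \<notin> vec.span ((!) D ` {i' \<in> I. i < i'})"
  shows "I \<subseteq> J"
proof
  have I_bound: "I \<subseteq> {..<length D}" and J_bound: "J \<subseteq> {..<length D}"
    using I J by (simp_all add: basesB_def)
  then have "finite I"
    using finite_subset by blast
  fix i
  assume "i \<in> I"
  show "i \<in> J"
  proof (rule ccontr)
    assume "i \<notin> J"
    have "D ! i \<in> vec.span ((\<lambda>i. D ! f i) ` {i' \<in> I. i \<le> i'})"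
      using vec.span_triangular[of I "\<lambda>i. D ! f i" "(!) D"] \<open>finite I\<close> f_in f_notin \<open>i \<in> I\<close>
      by blast
    also have "\<dots> \<subseteq> vec.span ((!) D ` {j \<in> J. i < j})"
    proof (intro vec.span_mono subsetI)
      fix y
      assume "y \<in> (\<lambda>i. D ! f i) ` {i' \<in> I. i \<le> i'}"
      then obtain i' where i': "i' \<in> I" "i \<le> i'" and y: "y = D ! f i'"
        by blast
      have "i' \<le> f i'"
        using basesB_flag_index_le[OF assms(1) I i'(1) _ f_in[OF i'(1)]] f[OF i'(1)] J_bound
        by blast
      moreover have "f i' \<noteq> i"
        using f[OF i'(1)] \<open>i \<notin> J\<close> by blast
      ultimately have "i < f i'"
        using i'(2) by linarith
      then show "y \<in> (!) D ` {j \<in> J. i < j}"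
        using y f[OF i'(1)] by blast
    qed
    finally show False
      using basesB_not_in_span_later[OF assms(1) J _ \<open>i \<notin> J\<close>] \<open>i \<in> I\<close> I_bound by blast
  qed
qed

lemma basesB_subset_imp_eq:
  assumes "distinct D" and "I \<in> basesB D" and "J \<in> basesB D" and "I \<subseteq> J"
  shows "I = J"
proof -
  have I_bound: "I \<subseteq> {..<length D}" and J_bound: "J \<subseteq> {..<length D}"
    using assms(2,3) by (simp_all add: basesB_def)
  have "(!) D ` J = (!) D ` I"
    using assms(2-4) by (intro vec.spanning_subset_independent) (auto simp: basesB_def)
  moreover have "inj_on ((!) D) {..<length D}"
    using assms(1) by (simp add: inj_on_nth)
  ultimately show ?thesis
    using I_bound J_bound by (simp add: inj_on_image_eq_iff)
qed

lemma basesB_eq_if_flag_adapted: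
  assumes "distinct D" and "I \<in> basesB D" and "J \<in> basesB D"
    and adapted: "\<And>i. i \<in> I \<Longrightarrow> \<exists>k\<in>(!) D ` J.
      k \<in> vec.span ((!) D ` {i' \<in> I. i \<le> i'}) \<and> k \<notin> vec.span ((!) D ` {i' \<in> I. i < i'})"
  shows "I = J"
proof -
  have "\<forall>i\<in>I. \<exists>j. j \<in> J \<and> D ! j \<in> vec.span ((!) D ` {i' \<in> I. i \<le> i'}) \<and>
      D ! j \<notin> vec.span ((!) D ` {i' \<in> I. i < i'})"
    using adapted by blast
  then obtain f where "\<forall>i\<in>I. f i \<in> J \<and> D ! f i \<in> vec.span ((!) D ` {i' \<in> I. i \<le> i'}) \<and>
      D ! f i \<notin> vec.span ((!) D ` {i' \<in> I. i < i'})"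
    by (rule bchoice[THEN exE])
  then have "I \<subseteq> J"
    by (intro basesB_subset_if_flag_witnesses[OF assms(1-3), of f]) blast+
  with assms(1-3) show ?thesis
    by (rule basesB_subset_imp_eq)
qed

lemma basesB_sorted_basis_list:
  assumes "distinct D" and "I \<in> basesB D"
  shows "finite I" and "inj_on ((!) D) I"
    and "distinct (rev (map ((!) D) (sorted_list_of_set I)))"
    and "set (rev (map ((!) D) (sorted_list_of_set I))) = (!) D ` I"
proof -
  have "I \<subseteq> {..<length D}"
    using assms(2) by (simp add: basesB_def)
  then show "finite I" and "inj_on ((!) D) I"
    by (auto intro: finite_subset inj_on_nth[OF assms(1)])
  then show "distinct (rev (map ((!) D) (sorted_list_of_set I)))"
    and "set (rev (map ((!) D) (sorted_list_of_set I))) = (!) D ` I"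
    by (simp_all add: distinct_map)
qed

lemma flag_adapted_sorted_indices:
  assumes "finite I" and "flag_adapted A [] (rev (map ((!) D) (sorted_list_of_set I)))" and "i \<in> I"
  shows "\<exists>k\<in>A. k \<in> vec.span ((!) D ` {i' \<in> I. i \<le> i'}) \<and> k \<notin> vec.span ((!) D ` {i' \<in> I. i < i'})"
proof -
  have "i \<in> set (sorted_list_of_set I)"
    using assms(1,3) by simp
  then obtain xs ys where s: "sorted_list_of_set I = xs @ i # ys"
    using split_list by metis
  have "sorted_wrt (<) (xs @ i # ys)"
    unfolding s[symmetric] by (rule strict_sorted_list_of_set)
  then have xs_less: "\<forall>x\<in>set xs. x < i" and ys_greater: "\<forall>y\<in>set ys. i < y"
    by (simp_all add: sorted_wrt_append)
  have I_eq: "I = set xs \<union> insert i (set ys)"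
    using assms(1) set_sorted_list_of_set[of I] by (simp add: s)
  have later: "{i' \<in> I. i < i'} = set ys"
    unfolding I_eq using xs_less ys_greater by auto
  have earlier: "{i' \<in> I. i \<le> i'} = insert i (set ys)"
    unfolding I_eq using xs_less ys_greater by auto
  have "flag_adapted A [] (rev (map ((!) D) ys) @ D ! i # rev (map ((!) D) xs))"
    using assms(2) by (simp add: s)
  then have "\<exists>k\<in>A. k \<in> vec.span (insert (D ! i) ((!) D ` set ys)) \<and> k \<notin> vec.span ((!) D ` set ys)"
    using flag_adapted_append by fastforce
  then show ?thesis
    unfolding later earlier image_insert .
qed

lemma residue_state_phi_idx:
  assumes "distinct D" and "J \<in> basesB D"
  shows "residue_state ((!) D ` J) [] (phi_idx D J) 1"
proof -
  have independent: "vec.independent ((!) D ` J)"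
    using assms(2) by (simp add: basesB_def)
  then have "0 \<notin> (!) D ` J"
    using vec.dependent_zero by blast
  then have remaining: "remaining_factors ((!) D ` J) [] = (!) D ` J"
    by (auto simp: remaining_factors_def)
  have "phi_idx D J x = 1 / (\<Prod>k\<in>(!) D ` J. pair k x)" for x
    using prod.reindex[OF basesB_sorted_basis_list(2)[OF assms], of "\<lambda>k. pair k x"]
    by (simp add: phi_idx_def)
  with independent show ?thesis
    by (simp add: residue_state_def remaining)
qed

lemma res_form_phi_idx_self:
  assumes "distinct D" and "J \<in> basesB D"
  shows "res_form D J (phi_idx D J) = 1"
  unfolding res_form_def
proof (rule iter_res_complete[OF _ _ _ residue_state_phi_idx[OF assms]])
  show "finite ((!) D ` J)"
    using basesB_sorted_basis_list(1)[OF assms] by simp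
  show "vec.independent (set (rev (map ((!) D) (sorted_list_of_set J)) @ []))"
    using assms(2) basesB_sorted_basis_list(4)[OF assms] by (simp add: basesB_def)
qed (use basesB_sorted_basis_list(3,4)[OF assms] in simp_all)

lemma res_form_phi_idx_nonzero_imp_eq:
  assumes "distinct D" and "I \<in> basesB D" and "J \<in> basesB D"
    and "res_form D I (phi_idx D J) \<noteq> 0"
  shows "I = J"
proof -
  let ?bs = "rev (map ((!) D) (sorted_list_of_set I))"
  have "flag_adapted ((!) D ` J) [] ?bs"
  proof (rule conjunct2[OF iter_res_nonzero_imp_flag_adapted[OF _ _ _ _ residue_state_phi_idx[OF assms(1,3)]]])
    show "finite ((!) D ` J)"
      using basesB_sorted_basis_list(1)[OF assms(1,3)] by simp
    show "vec.independent (set (?bs @ []))" and "(!) D ` J \<subseteq> vec.span (set (?bs @ []))"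
      using assms(2) basesB_sorted_basis_list(4)[OF assms(1,2)] by (simp_all add: basesB_def)
    show "distinct (?bs @ [])"
      using basesB_sorted_basis_list(3)[OF assms(1,2)] by simp
    show "iter_res ?bs [] (phi_idx D J) 0 \<noteq> 0"
      using assms(4) by (simp add: res_form_def)
  qed
  then show ?thesis
    using basesB_eq_if_flag_adapted[OF assms(1-3)]
      flag_adapted_sorted_indices[OF basesB_sorted_basis_list(1)[OF assms(1,2)]]
    by blast
qed

theorem mainTheorem10:
  fixes D :: "('k::field_char_0 ^ 'n) list"
  assumes "distinct D" and "0 \<notin> set D" and "vec.span (set D) = UNIV"
    and "I \<in> basesB D" and "J \<in> basesB D"
  shows "res_form D I (phi_idx D J) = (if I = J then 1 else 0)"
proof (cases "I = J")
  case True
  with assms(1,5) show ?thesis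
    by (simp add: res_form_phi_idx_self)
next
  case False
  with res_form_phi_idx_nonzero_imp_eq[OF assms(1,4,5)] show ?thesis
    by auto
qed

end
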